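(* Let $n,k$ be positive integers and $i\in\{1,\ldots,n\}$ such that $k\cdot\frac{i}{n}\cdot \frac{n-i}{n}\ge 1$ and $n\ge 8k$. If $H\sim\text{Hyp}(n,i,k)$, then $\mathbb{P}(H \ge ik/n) \ge k/n$.
   Context: $\text{Hyp}(n,i,k)$ denotes the hypergeometric distribution: the number of black marbles in a sample without replacement of size $k$ from an urn with $i$ black and $n-i$ white marbles, i.e. $\mathbb{P}(H=j)=\binom{i}{j}\binom{n-i}{k-j}/\binom{n}{k}$. *)

theory Defs
  imports Complex_Main
begin

text \<open>Hypergeometric distribution Hyp(n,i,k): number of black marbles in a sample
  without replacement of size k from an urn with i black and n-i white marbles.\<close>

definition hyp_pmf :: "nat \<Rightarrow> nat \<Rightarrow> nat \<Rightarrow> nat \<Rightarrow> real" where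
  "hyp_pmf n i k j =
     (if j \<le> k then real (i choose j) * real ((n - i) choose (k - j)) / real (n choose k) else 0)"

definition hyp_prob_ge :: "nat \<Rightarrow> nat \<Rightarrow> nat \<Rightarrow> real \<Rightarrow> real" where
  "hyp_prob_ge n i k t = (\<Sum>j \<in> {j. j \<le> k \<and> real j \<ge> t}. hyp_pmf n i k j)"

end

theory Submission
  imports Defs "HOL-Analysis.Convex"
begin

text \<open>Let \<open>\<mu> = ik/n\<close>, let \<open>s\<close> be the largest integer below \<open>\<mu>\<close>, write \<open>q\<close> for the
  point probabilities and put \<open>T = P(H > s) = P(H \<ge> \<mu>)\<close>, \<open>L = P(H \<le> s) = 1 - T\<close> and
  \<open>A = E (\<mu> - H)\<^sup>+\<close>. Since \<open>E H = \<mu>\<close>, Cauchy-Schwarz on either side of \<open>s\<close> gives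
  \<open>A\<^sup>2 \<le> T L Var H\<close>. The recurrence \<open>(i - j)(k - j) q(j) = (j + 1)(n - i - k + j + 1) q(j + 1)\<close>
  telescopes to \<open>A = (i - s)(k - s) q(s) / n\<close> and shows that \<open>q\<close> increases up to \<open>s\<close>, whence
  \<open>L\<^sup>2 \<le> q(s) (2A + L)\<close> and so \<open>(i - s)(k - s)/n \<cdot> L\<^sup>2 \<le> A (2A + L)\<close>. The hypotheses give
  \<open>Var H \<ge> 7/8\<close> and \<open>(i - s)(k - s)/n \<ge> 7/8 \<cdot> Var H\<close>, and then the two bounds on \<open>A\<close> are
  incompatible unless \<open>T \<ge> 1/8\<close>; finally \<open>1/8 \<ge> k/n\<close>.\<close>

lemma binomial_Suc_ratio:
  "(of_nat m - of_nat j) * of_nat (m choose j)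
     = (of_nat j + 1) * (of_nat (m choose Suc j) :: 'a::field_char_0)"
  using gbinomial_absorption[of j "of_nat m :: 'a"]
  by (simp add: binomial_gbinomial gbinomial_absorb_comp add.commute)

lemma binomial_absorb_comp_of_nat:
  assumes "0 < m"
  shows "(of_nat m - of_nat j) * of_nat (m choose j)
     = of_nat m * (of_nat ((m - 1) choose j) :: 'a::field_char_0)"
  using assms by (simp add: binomial_gbinomial gbinomial_absorb_comp)

lemma times_binomial_minus2_eq:
  assumes "0 < k"
  shows "k * (n - k) * (n choose k) = n * (n - 1) * ((n - 2) choose (k - 1))"
proof -
  have "k * (n - k) * (n choose k) = (n - k) * (k * (n choose k))"
    by (simp only: ac_simps)
  also have "\<dots> = n * ((n - k) * ((n - 1) choose (k - 1)))"
    using times_binomial_minus1_eq[OF assms] by simp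
  also have "(n - k) * ((n - 1) choose (k - 1)) = (n - 1) * ((n - 2) choose (k - 1))"
    using binomial_absorb_comp[of "n - 1" "k - 1"] assms by (simp add: numeral_2_eq_2)
  finally show ?thesis
    by (simp only: ac_simps)
qed

lemma weighted_Cauchy_Schwarz:
  fixes w y :: "'a \<Rightarrow> real"
  assumes "\<And>x. x \<in> S \<Longrightarrow> 0 \<le> w x"
  shows "(\<Sum>x\<in>S. w x * y x)\<^sup>2 \<le> (\<Sum>x\<in>S. w x) * (\<Sum>x\<in>S. w x * (y x)\<^sup>2)"
proof -
  have "(\<Sum>x\<in>S. w x * y x) = (\<Sum>x\<in>S. sqrt (w x) * (sqrt (w x) * y x))"
    using assms by (intro sum.cong) (auto simp flip: mult.assoc)
  also have "\<dots>\<^sup>2 \<le> (\<Sum>x\<in>S. (sqrt (w x))\<^sup>2) * (\<Sum>x\<in>S. (sqrt (w x) * y x)\<^sup>2)"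
    by (rule Cauchy_Schwarz_ineq_sum)
  also have "\<dots> = (\<Sum>x\<in>S. w x) * (\<Sum>x\<in>S. w x * (y x)\<^sup>2)"
    using assms by (simp add: power_mult_distrib)
  finally show ?thesis .
qed

lemma sq_sum_le_split_variance:
  fixes q X :: "'a \<Rightarrow> real"
  assumes "finite S" "P \<subseteq> S" "\<And>x. x \<in> S \<Longrightarrow> 0 \<le> q x"
    and mean_zero: "(\<Sum>x\<in>S. X x * q x) = 0"
  shows "(\<Sum>x\<in>P. X x * q x)\<^sup>2 * (\<Sum>x\<in>S. q x)
    \<le> (\<Sum>x\<in>P. q x) * (\<Sum>x\<in>S - P. q x) * (\<Sum>x\<in>S. (X x)\<^sup>2 * q x)"
proof -
  have split: "(\<Sum>x\<in>S. f x) = (\<Sum>x\<in>P. f x) + (\<Sum>x\<in>S - P. f x)" for f :: "'a \<Rightarrow> real"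
    using assms(1,2) by (metis add.commute sum.subset_diff)
  define A where "A = (\<Sum>x\<in>P. X x * q x)"
  define V\<^sub>P V\<^sub>N where "V\<^sub>P = (\<Sum>x\<in>P. (X x)\<^sup>2 * q x)" and "V\<^sub>N = (\<Sum>x\<in>S - P. (X x)\<^sup>2 * q x)"
  define Q\<^sub>P Q\<^sub>N where "Q\<^sub>P = (\<Sum>x\<in>P. q x)" and "Q\<^sub>N = (\<Sum>x\<in>S - P. q x)"
  have "(\<Sum>x\<in>S - P. q x * (- X x)) = A"
    using mean_zero split[of "\<lambda>x. X x * q x"] by (simp add: A_def sum_negf mult.commute)
  then have "A\<^sup>2 \<le> Q\<^sub>N * V\<^sub>N"
    using weighted_Cauchy_Schwarz[of "S - P" q "\<lambda>x. - X x"] assms(3)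
    by (simp add: Q\<^sub>N_def V\<^sub>N_def mult.commute)
  moreover have "A\<^sup>2 \<le> Q\<^sub>P * V\<^sub>P"
    using weighted_Cauchy_Schwarz[of P q X] assms(2,3)
    by (auto simp: A_def Q\<^sub>P_def V\<^sub>P_def mult.commute)
  moreover have "0 \<le> Q\<^sub>P" "0 \<le> Q\<^sub>N"
    using assms(2,3) by (auto simp: Q\<^sub>P_def Q\<^sub>N_def intro: sum_nonneg)
  ultimately have "A\<^sup>2 * Q\<^sub>P + A\<^sup>2 * Q\<^sub>N \<le> Q\<^sub>P * (Q\<^sub>N * V\<^sub>N) + Q\<^sub>N * (Q\<^sub>P * V\<^sub>P)"
    by (intro add_mono) (simp_all add: mult_left_mono mult.commute)
  then show ?thesis
    using split[of q] split[of "\<lambda>x. (X x)\<^sup>2 * q x"]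
    by (simp add: A_def V\<^sub>P_def V\<^sub>N_def Q\<^sub>P_def Q\<^sub>N_def algebra_simps)
qed

lemma sum_sq_deviation_by_parts:
  fixes f :: "nat \<Rightarrow> real"
  shows "(\<Sum>j\<le>t. (\<mu> - real j)\<^sup>2 * f j)
    = (\<Sum>j<t. \<Sum>l\<le>j. (\<mu> - real l) * f l) + (\<mu> - real t) * (\<Sum>l\<le>t. (\<mu> - real l) * f l)"
  by (induction t) (simp_all add: power2_eq_square algebra_simps)

lemma sq_sum_atMost_le:
  fixes f :: "nat \<Rightarrow> real"
  assumes "\<And>j. j \<le> s \<Longrightarrow> 0 \<le> f j \<and> f j \<le> g"
  shows "(\<Sum>j\<le>s. f j)\<^sup>2 \<le> g * (\<Sum>j\<le>s. (2 * (real s - real j) + 1) * f j)"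
  using assms
proof (induction s)
  case 0
  then show ?case by (simp add: power2_eq_square mult_right_mono)
next
  case (Suc s)
  define F where "F = (\<Sum>j\<le>s. f j)"
  have IH: "F\<^sup>2 \<le> g * (\<Sum>j\<le>s. (2 * (real s - real j) + 1) * f j)"
    unfolding F_def using Suc by simp
  have "0 \<le> F" unfolding F_def using Suc.prems by (intro sum_nonneg) auto
  moreover have "0 \<le> f (Suc s)" "f (Suc s) \<le> g" using Suc.prems by auto
  ultimately have "2 * F * f (Suc s) + f (Suc s) * f (Suc s) \<le> 2 * F * g + g * f (Suc s)"
    by (intro add_mono mult_left_mono mult_right_mono) auto
  moreover have "(\<Sum>j\<le>s. (2 * (real (Suc s) - real j) + 1) * f j)
      = (\<Sum>j\<le>s. (2 * (real s - real j) + 1) * f j) + 2 * F"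
    unfolding F_def sum_distrib_left sum.distrib[symmetric] by (intro sum.cong) (auto simp: algebra_simps)
  ultimately show ?case
    using IH by (simp add: F_def power2_eq_square algebra_simps)
qed

lemma real_mult_div_le_factors:
  assumes "i \<le> n" "k \<le> n"
  shows "real i * real k / real n \<le> real i" "real i * real k / real n \<le> real k"
proof -
  have "real i * real k \<le> real i * real n" "real i * real k \<le> real n * real k"
    using assms by (simp_all add: mult_left_mono mult_right_mono)
  then show "real i * real k / real n \<le> real i" "real i * real k / real n \<le> real k"
    by (simp_all add: divide_le_eq mult.commute)
qed

lemma one_eighth_le_of_tail_inequalities:
  fixes A L T W c :: real
  assumes "T + L = 1" "0 \<le> A"
    and cs: "A\<^sup>2 \<le> T * L * c" and lower: "W * L\<^sup>2 \<le> A * (2 * A + L)"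
    and "7/8 * c \<le> W" "7/8 \<le> c"
  shows "1/8 \<le> T"
proof (rule ccontr)
  assume "\<not> 1/8 \<le> T"
  then have "T < L / 7" "0 < L" using \<open>T + L = 1\<close> by auto
  moreover have "0 < L * c" using \<open>0 < L\<close> \<open>7/8 \<le> c\<close> by simp
  ultimately have "T * (L * c) < L / 7 * (L * c)" by (intro mult_strict_right_mono)
  with cs have "A\<^sup>2 < L / 7 * (L * c)" by (simp add: mult.assoc)
  also have "\<dots> = c / 7 * L\<^sup>2" by (simp add: power2_eq_square)
  finally have A_small: "A\<^sup>2 < c / 7 * L\<^sup>2" .
  define W' where "W' = W - 2 * c / 7"
  have W': "33/56 * c \<le> W'" using \<open>7/8 * c \<le> W\<close> by (simp add: W'_def)
  have "W' * L\<^sup>2 < A * L"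
    using lower A_small by (simp add: W'_def algebra_simps power2_eq_square)
  then have "W' * L < A" using \<open>0 < L\<close> by (simp add: power2_eq_square mult.assoc[symmetric])
  moreover have "0 \<le> W' * L" using W' \<open>7/8 \<le> c\<close> \<open>0 < L\<close> by simp
  ultimately have "W'\<^sup>2 * L\<^sup>2 < c / 7 * L\<^sup>2"
    using A_small power_strict_mono[of "W' * L" A 2] by (simp add: power_mult_distrib)
  then have "W'\<^sup>2 < c / 7" using \<open>0 < L\<close> by simp
  moreover have "(33/56 * c)\<^sup>2 \<le> W'\<^sup>2" using W' \<open>7/8 \<le> c\<close> by (intro power_mono) auto
  ultimately have "(33/56)\<^sup>2 * c * c < 1/7 * c" by (simp add: power2_eq_square)
  then show False using \<open>7/8 \<le> c\<close> by (simp add: power2_eq_square)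
qed

lemma hyp_pmf_nonneg: "0 \<le> hyp_pmf n i k j"
  by (simp add: hyp_pmf_def)

lemma hyp_pmf_sum_eq_1:
  assumes "i \<le> n" "k \<le> n"
  shows "(\<Sum>j\<le>k. hyp_pmf n i k j) = 1"
proof -
  have "(\<Sum>j\<le>k. (i choose j) * ((n - i) choose (k - j))) = n choose k"
    using vandermonde[of i "n - i" k] assms by simp
  then have "(\<Sum>j\<le>k. real (i choose j) * real ((n - i) choose (k - j))) = real (n choose k)"
    by (metis (no_types, lifting) of_nat_mult of_nat_sum sum.cong)
  then show ?thesis
    using assms by (simp add: hyp_pmf_def flip: sum_divide_distrib)
qed

lemma hyp_pmf_Suc:
  assumes "j < k" "i \<le> n"
  shows "(real i - real j) * (real k - real j) * hyp_pmf n i k j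
    = (real j + 1) * (real n - real i - real k + real j + 1) * hyp_pmf n i k (Suc j)"
proof -
  define m r where "m = n - i" and "r = k - Suc j"
  have "Suc r = k - j" "real r + 1 = real k - real j"
    "real m - real r = real n - real i - real k + real j + 1"
    using assms by (simp_all add: m_def r_def of_nat_diff)
  then have white_factor: "(real k - real j) * real (m choose (k - j))
      = (real n - real i - real k + real j + 1) * real (m choose r)"
    using binomial_Suc_ratio[of m r, where 'a = real] by simp
  have "(real i - real j) * (real k - real j) * hyp_pmf n i k j
      = ((real i - real j) * real (i choose j)) * ((real k - real j) * real (m choose (k - j)))
        / real (n choose k)"
    using assms by (simp add: hyp_pmf_def m_def)
  also have "\<dots> = ((real j + 1) * real (i choose Suc j))
        * ((real n - real i - real k + real j + 1) * real (m choose r)) / real (n choose k)"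
    by (simp only: binomial_Suc_ratio white_factor)
  also have "\<dots> = (real j + 1) * (real n - real i - real k + real j + 1) * hyp_pmf n i k (Suc j)"
    using assms by (simp add: hyp_pmf_def m_def r_def)
  finally show ?thesis .
qed

lemma hyp_partial_first_moment:
  assumes "0 < n" "i \<le> n" "t \<le> k"
  shows "(\<Sum>j\<le>t. (real i * real k / real n - real j) * hyp_pmf n i k j)
    = (real i - real t) * (real k - real t) * hyp_pmf n i k t / real n"
  using assms(3)
proof (induction t)
  case 0
  then show ?case by simp
next
  case (Suc t)
  then have "(\<Sum>j\<le>Suc t. (real i * real k / real n - real j) * hyp_pmf n i k j)
    = (real i - real t) * (real k - real t) * hyp_pmf n i k t / real n
      + (real i * real k / real n - real (Suc t)) * hyp_pmf n i k (Suc t)"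
    by simp
  also have "\<dots> = (real t + 1) * (real n - real i - real k + real t + 1) * hyp_pmf n i k (Suc t) / real n
      + (real i * real k / real n - real (Suc t)) * hyp_pmf n i k (Suc t)"
    using hyp_pmf_Suc[of t k i n] Suc.prems assms(2) by simp
  also have "\<dots> = (real i - real (Suc t)) * (real k - real (Suc t)) * hyp_pmf n i k (Suc t) / real n"
    using assms(1) by (simp add: field_simps)
  finally show ?case .
qed

lemma hyp_pmf_times_complements:
  assumes "0 < i" "i \<le> n" "j < k"
  shows "(real i - real j) * (real k - real j) * hyp_pmf n i k j
    = real i * real (n - i) * real (((i - 1) choose j) * ((n - i - 1) choose (k - 1 - j)))
      / real (n choose k)"
proof -
  define m where "m = n - i"
  have "(real k - real j) * real (m choose (k - j)) = real m * real ((m - 1) choose (k - 1 - j))"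
    using times_binomial_minus1_eq[of "k - j" m] assms(3)
    by (metis diff_diff_left diff_commute of_nat_diff of_nat_mult zero_less_diff less_imp_le)
  moreover have "(real i - real j) * (real k - real j) * hyp_pmf n i k j
    = ((real i - real j) * real (i choose j)) * ((real k - real j) * real (m choose (k - j)))
      / real (n choose k)"
    using assms(3) by (simp add: hyp_pmf_def m_def)
  ultimately show ?thesis
    using binomial_absorb_comp_of_nat[of i j, where 'a = real] assms(1) by (simp add: m_def)
qed

lemma hyp_complement_product_moment:
  assumes "0 < i" "i < n" "0 < k" "k < n"
  shows "(\<Sum>j<k. (real i - real j) * (real k - real j) * hyp_pmf n i k j)
    = real i * real (n - i) * real k * real (n - k) / (real n * (real n - 1))"
proof -
  define m where "m = n - i"
  have "{..<k} = {..k - 1}"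
    using assms(3) by (cases k) auto
  have "(\<Sum>j<k. (real i - real j) * (real k - real j) * hyp_pmf n i k j)
      = (\<Sum>j<k. real i * real m * real (((i - 1) choose j) * ((m - 1) choose (k - 1 - j)))
        / real (n choose k))"
    using hyp_pmf_times_complements[of i n] assms(1,2) by (intro sum.cong) (simp_all add: m_def)
  also have "\<dots> = real i * real m
      * (real (\<Sum>j\<le>k - 1. ((i - 1) choose j) * ((m - 1) choose (k - 1 - j))) / real (n choose k))"
    using \<open>{..<k} = {..k - 1}\<close>
    by (simp only: sum_divide_distrib sum_distrib_left of_nat_sum times_divide_eq_right)
  also have "(\<Sum>j\<le>k - 1. ((i - 1) choose j) * ((m - 1) choose (k - 1 - j))) = (n - 2) choose (k - 1)"
    using vandermonde[of "i - 1" "m - 1" "k - 1"] assms by (simp add: m_def)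
  also have "real ((n - 2) choose (k - 1)) / real (n choose k)
      = real k * real (n - k) / (real n * (real n - 1))"
  proof -
    have "real (k * (n - k) * (n choose k)) = real (n * (n - 1) * ((n - 2) choose (k - 1)))"
      using times_binomial_minus2_eq[OF assms(3)] by (simp only:)
    then have "real k * real (n - k) * real (n choose k)
        = real n * (real n - 1) * real ((n - 2) choose (k - 1))"
      using assms(4) by (simp add: of_nat_diff)
    then show ?thesis
      using assms by (simp add: field_simps)
  qed
  finally show ?thesis
    by (simp add: m_def)
qed

lemma hyp_variance:
  assumes "0 < i" "i < n" "0 < k" "k < n"
  shows "(\<Sum>j\<le>k. (real i * real k / real n - real j)\<^sup>2 * hyp_pmf n i k j)
    = real i * real (n - i) * real k * real (n - k) / ((real n)\<^sup>2 * (real n - 1))"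
    (is "?var = _")
proof -
  let ?P = "\<lambda>t. \<Sum>j\<le>t. (real i * real k / real n - real j) * hyp_pmf n i k j"
  have P: "?P t = (real i - real t) * (real k - real t) * hyp_pmf n i k t / real n" if "t \<le> k" for t
    using hyp_partial_first_moment[of n i t k] that assms by simp
  have "?var = (\<Sum>t<k. ?P t) + (real i * real k / real n - real k) * ?P k"
    by (rule sum_sq_deviation_by_parts)
  also have "\<dots> = (\<Sum>t<k. (real i - real t) * (real k - real t) * hyp_pmf n i k t) / real n"
    using P by (simp add: sum_divide_distrib)
  also have "\<dots> = real i * real (n - i) * real k * real (n - k) / ((real n)\<^sup>2 * (real n - 1))"
    using hyp_complement_product_moment[OF assms] by (simp add: power2_eq_square)
  finally show ?thesis .
qed

lemma hyp_pmf_le_Suc: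
  assumes "0 < n" "i \<le> n" "k \<le> n" and below_mean: "real (Suc j) * real n \<le> real i * real k"
  shows "hyp_pmf n i k j \<le> hyp_pmf n i k (Suc j)"
proof (cases "k - j \<le> n - i")
  case False
  then have "hyp_pmf n i k j = 0"
    by (simp add: hyp_pmf_def not_le)
  then show ?thesis
    using hyp_pmf_nonneg by simp
next
  case True
  have "real i * real k \<le> real i * real n" "real i * real k \<le> real k * real n"
    using assms(2,3) by (simp_all add: mult_left_mono mult_right_mono mult.commute[of "real k"])
  then have "real (Suc j) * real n \<le> real i * real n" "real (Suc j) * real n \<le> real k * real n"
    using below_mean by linarith+
  then have "Suc j \<le> i" "Suc j \<le> k"
    using assms(1) by simp_all
  define D where "D = (real j + 1) * (real n - real i - real k + real j + 1)"
  have "0 < D"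
    using True \<open>Suc j \<le> k\<close> by (simp add: D_def of_nat_diff)
  have "D \<le> (real i - real j) * (real k - real j)"
    using below_mean \<open>Suc j \<le> i\<close> \<open>Suc j \<le> k\<close> by (simp add: D_def algebra_simps)
  then have "D * hyp_pmf n i k j \<le> (real i - real j) * (real k - real j) * hyp_pmf n i k j"
    using hyp_pmf_nonneg by (rule mult_right_mono)
  also have "\<dots> = D * hyp_pmf n i k (Suc j)"
    using hyp_pmf_Suc[of j k i n] assms(2) \<open>Suc j \<le> k\<close> by (simp add: D_def)
  finally show ?thesis
    using \<open>0 < D\<close> by simp
qed

lemma hyp_lower_tail_bound:
  fixes n i k s :: nat
  defines "\<mu> \<equiv> real i * real k / real n"
  defines "L \<equiv> \<Sum>j\<le>s. hyp_pmf n i k j"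
    and "A \<equiv> \<Sum>j\<le>s. (\<mu> - real j) * hyp_pmf n i k j"
  assumes "0 < n" "i \<le> n" "k \<le> n" "real s < \<mu>"
  shows "(real i - real s) * (real k - real s) / real n * L\<^sup>2 \<le> A * (2 * A + L)"
proof -
  let ?q = "hyp_pmf n i k"
  define W where "W = (real i - real s) * (real k - real s) / real n"
  have "\<mu> \<le> real i" "\<mu> \<le> real k"
    unfolding \<mu>_def using assms(5,6) by (rule real_mult_div_le_factors)+
  then have "s \<le> k" "0 \<le> W"
    using \<open>real s < \<mu>\<close> by (simp_all add: W_def)
  then have A_eq: "A = W * ?q s"
    using hyp_partial_first_moment[of n i s k] assms(4,5) by (simp add: A_def \<mu>_def W_def)
  have "?q j \<le> ?q s" if "j \<le> s" for j
  proof (rule lift_Suc_mono_le_ivl[of "{..<s}"])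
    fix t assume "t \<in> {..<s}"
    then have "real (Suc t) * real n \<le> real s * real n"
      by (simp add: mult_right_mono)
    also have "\<dots> \<le> real i * real k"
      using \<open>real s < \<mu>\<close> assms(4) by (simp add: \<mu>_def pos_less_divide_eq)
    finally have "real (Suc t) * real n \<le> real i * real k" .
    then show "?q t \<le> ?q (Suc t)"
      using hyp_pmf_le_Suc assms(4-6) by blast
  qed (use that in auto)
  then have "L\<^sup>2 \<le> ?q s * (\<Sum>j\<le>s. (2 * (real s - real j) + 1) * ?q j)"
    unfolding L_def using hyp_pmf_nonneg by (intro sq_sum_atMost_le) auto
  also have "\<dots> = ?q s * (2 * (\<Sum>j\<le>s. (real s - real j) * ?q j) + L)"
    unfolding L_def sum_distrib_left sum.distrib[symmetric]
    by (auto simp: algebra_simps intro!: sum.cong)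
  also have "\<dots> \<le> ?q s * (2 * A + L)"
    unfolding A_def using \<open>real s < \<mu>\<close> hyp_pmf_nonneg
    by (intro mult_left_mono add_right_mono mult_left_mono sum_mono mult_right_mono) auto
  finally have "W * L\<^sup>2 \<le> W * (?q s * (2 * A + L))"
    using \<open>0 \<le> W\<close> by (rule mult_left_mono)
  then show ?thesis
    by (simp add: A_eq W_def mult.assoc)
qed

lemma hyp_partial_first_moment_sq_le:
  fixes n i k s :: nat
  defines "\<mu> \<equiv> real i * real k / real n"
  assumes "0 < i" "i < n" "0 < k" "k < n" "s \<le> k"
  shows "(\<Sum>j\<le>s. (\<mu> - real j) * hyp_pmf n i k j)\<^sup>2
    \<le> (\<Sum>j\<in>{..k} - {..s}. hyp_pmf n i k j) * (\<Sum>j\<le>s. hyp_pmf n i k j)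
      * (real i * real (n - i) * real k * real (n - k) / ((real n)\<^sup>2 * (real n - 1)))"
proof -
  let ?q = "hyp_pmf n i k"
  have "(\<Sum>j\<le>k. (\<mu> - real j) * ?q j) = 0"
    using hyp_partial_first_moment[of n i k k] assms(3,5) unfolding \<mu>_def by simp
  then have "(\<Sum>j\<le>s. (\<mu> - real j) * ?q j)\<^sup>2 * (\<Sum>j\<le>k. ?q j)
      \<le> (\<Sum>j\<le>s. ?q j) * (\<Sum>j\<in>{..k} - {..s}. ?q j) * (\<Sum>j\<le>k. (\<mu> - real j)\<^sup>2 * ?q j)"
    by (intro sq_sum_le_split_variance[of "{..k}" "{..s}" ?q "\<lambda>j. \<mu> - real j"])
      (use assms(6) hyp_pmf_nonneg in auto)
  then show ?thesis
    using hyp_pmf_sum_eq_1[of i n k] hyp_variance[OF assms(2-5)] assms(3,5)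
    unfolding \<mu>_def by (simp add: mult.commute)
qed

lemma hyp_prob_ge_mean_ge_one_eighth:
  fixes n i k :: nat
  defines "c \<equiv> real i * real (n - i) * real k * real (n - k) / ((real n)\<^sup>2 * (real n - 1))"
  assumes "0 < i" "i < n" "0 < k" "k < n" "8 \<le> n" "7/8 \<le> c"
  shows "1/8 \<le> hyp_prob_ge n i k (real i * real k / real n)"
proof -
  let ?q = "hyp_pmf n i k"
  define \<mu> where "\<mu> = real i * real k / real n"
  define s where "s = nat \<lceil>\<mu>\<rceil> - 1"
  define L T A where "L = (\<Sum>j\<le>s. ?q j)" and "T = (\<Sum>j\<in>{..k} - {..s}. ?q j)"
    and "A = (\<Sum>j\<le>s. (\<mu> - real j) * ?q j)"
  have "0 < \<mu>"
    using assms(2-5) by (simp add: \<mu>_def)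
  moreover have "\<mu> \<le> real i" "\<mu> \<le> real k"
    unfolding \<mu>_def using assms(3,5) by (simp_all add: real_mult_div_le_factors)
  ultimately have s: "real s < \<mu>" "\<mu> \<le> real s + 1"
    unfolding s_def by linarith+
  then have "s \<le> k"
    using \<open>\<mu> \<le> real k\<close> by linarith
  have "{j. j \<le> k \<and> \<mu> \<le> real j} = {..k} - {..s}"
    using s by force
  then have tail: "hyp_prob_ge n i k \<mu> = T"
    by (simp add: hyp_prob_ge_def T_def)
  have "(\<Sum>j\<le>k. ?q j) = T + L"
    unfolding T_def L_def by (rule sum.subset_diff) (use \<open>s \<le> k\<close> in auto)
  then have "T + L = 1"
    using hyp_pmf_sum_eq_1[of i n k] assms(3,5) by simp
  have cs: "A\<^sup>2 \<le> T * L * c"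
    unfolding A_def T_def L_def c_def \<mu>_def using assms(2-5) \<open>s \<le> k\<close>
    by (rule hyp_partial_first_moment_sq_le)
  have lower: "(real i - real s) * (real k - real s) / real n * L\<^sup>2 \<le> A * (2 * A + L)"
    unfolding L_def A_def \<mu>_def
    by (rule hyp_lower_tail_bound) (use assms(3,5) s(1) in \<open>auto simp: \<mu>_def\<close>)
  have "7/8 * c \<le> c * ((real n - 1) / real n)"
    using assms(6,7) by (simp add: field_simps)
  also have "\<dots> = (real i * real (n - k) / real n) * (real k * real (n - i) / real n) / real n"
    using assms(6) by (simp add: c_def field_simps power2_eq_square)
  also have "\<dots> = (real i - \<mu>) * (real k - \<mu>) / real n"
    using assms(3,5) by (simp add: \<mu>_def of_nat_diff field_simps)
  also have "\<dots> \<le> (real i - real s) * (real k - real s) / real n"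
    using s \<open>\<mu> \<le> real i\<close> \<open>\<mu> \<le> real k\<close> by (intro divide_right_mono mult_mono) auto
  finally have W: "7/8 * c \<le> (real i - real s) * (real k - real s) / real n" .
  have "0 \<le> A"
    using s hyp_pmf_nonneg by (auto simp: A_def intro!: sum_nonneg)
  from one_eighth_le_of_tail_inequalities[OF \<open>T + L = 1\<close> this cs lower W assms(7)]
  show ?thesis
    using tail by (simp add: \<mu>_def)
qed

theorem lemma8:
  fixes n k i :: nat
  assumes "n > 0" and "k > 0"
    and "1 \<le> i" and "i \<le> n"
    and "real k * (real i / real n) * (real (n - i) / real n) \<ge> 1"
    and "real n \<ge> 8 * real k"
  shows "hyp_prob_ge n i k (real i * real k / real n) \<ge> real k / real n"
proof -
  have "i < n"
    using assms(4,5) by (cases "i = n") auto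
  have "1 \<le> real k"
    using assms(2) by simp
  then have "k < n" "8 \<le> n"
    using assms(6) by linarith+
  have "7/8 \<le> (real n - real k) / (real n - 1)"
    using assms(6) \<open>8 \<le> n\<close> by (simp add: field_simps)
  also have "\<dots> \<le> real k * (real i / real n) * (real (n - i) / real n)
      * ((real n - real k) / (real n - 1))"
    using mult_right_mono[OF assms(5), of "(real n - real k) / (real n - 1)"] \<open>k < n\<close> \<open>8 \<le> n\<close>
    by simp
  also have "\<dots> = real i * real (n - i) * real k * real (n - k) / ((real n)\<^sup>2 * (real n - 1))"
    using \<open>k < n\<close> by (simp add: of_nat_diff power2_eq_square field_simps)
  finally have "1/8 \<le> hyp_prob_ge n i k (real i * real k / real n)"
    using \<open>i < n\<close> \<open>k < n\<close> \<open>8 \<le> n\<close> assms(2,3) by (intro hyp_prob_ge_mean_ge_one_eighth) auto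
  moreover have "real k / real n \<le> 1/8"
    using assms(1,6) by (simp add: divide_le_eq)
  ultimately show ?thesis
    by linarith
qed

end
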